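(* If a spherical curve $P$ has a trigon of type C, then $r(P)\le 3$.
   Context: A spherical curve is a smooth immersion $P:S^1\to S^2$ whose self-intersections are finitely many transverse double points, called crossings. It is oriented and has at least one crossing. Regions are the components of $S^2\setminus P(S^1)$, and edges are the arcs of the curve between consecutive crossings. A trigon is a region bounded by three edges. The Gauss word is the cyclic word of crossings met in one traversal of the curve; each crossing appears twice. Crossings $a,b$ are interlaced if their occurrences alternate $a\dots b\dots a\dots b$ in the cyclic word, i.e., their chords cross in the chord diagram. Let a trigon have crossings $x,y,z$. Each of its three edges gives a block of two consecutive letters in the Gauss word, one block on each of $\{x,y\}$, $\{y,z\}$, $\{z,x\}$, so the word has the form $B_1W_1B_2W_2B_3W_3$ with the $W_i$ free of $x,y,z$. The trigon's type is determined by how many of the three pairs among $x,y,z$ are interlaced: type A if exactly two pairs are interlaced; type B if exactly one; type C if all three (e.g. $xy\,W_1\,zx\,W_2\,yz\,W_3$, as in the trefoil curve); type D if none (e.g. $xy\,W_1\,yz\,W_2\,zx\,W_3$). A crossing is reducible if no crossing is interlaced with it; equivalently, only three distinct regions meet at it. $P$ is reducible if it has a reducible crossing. The inverse-half-twisted splice $I$ at a crossing $p$ takes the curve with cyclic Gauss word $p\,A\,p\,B$ to the curve with Gauss word $\overline{A}\,B$, where $\overline{A}$ is $A$ reversed. Geometrically, $p$ is smoothed in the unique way giving a single closed curve, and the result is re-oriented. The reductivity $r(P)$ is the minimal number of successive applications of $I$ needed to reach a reducible spherical curve; $r(P)=0$ if $P$ is reducible. *)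

theory Defs
  imports Main
begin

(* A spherical curve with n \<ge> 1 crossings is encoded combinatorially (up to
   homeomorphism of S^2) by its Gauss word w (a list, read cyclically, of length
   m = 2n, each crossing occurring exactly twice) together with the rotation
   system of the underlying 4-valent plane graph.
   Edge e (e < m) runs from position e to position (e+1) mod m of the word.
   Darts (edge-ends): (e, True) = start of edge e (at position e),
                      (e, False) = end of edge e (at position (e+1) mod m). *)

type_synonym dart = "nat \<times> bool"

definition gauss_word :: "'a list \<Rightarrow> bool" where
  "gauss_word w \<longleftrightarrow> w \<noteq> [] \<and> (\<forall>c \<in> set w. count_list w c = 2)"

definition darts :: "'a list \<Rightarrow> dart set" where
  "darts w = {(e, b). e < length w}"

fun dpos :: "'a list \<Rightarrow> dart \<Rightarrow> nat" where
  "dpos w (e, True) = e"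
| "dpos w (e, False) = Suc e mod length w"

definition vert :: "'a list \<Rightarrow> dart \<Rightarrow> 'a" where
  "vert w d = w ! dpos w d"

fun alpha :: "dart \<Rightarrow> dart" where
  "alpha (e, b) = (e, \<not> b)"

definition in_dart :: "'a list \<Rightarrow> nat \<Rightarrow> dart" where
  "in_dart w p = ((p + length w - 1) mod length w, False)"

definition out_dart :: "nat \<Rightarrow> dart" where
  "out_dart p = (p, True)"

(* rot is a (counterclockwise) rotation system: it cyclically permutes the four
   darts at each crossing, and the curve passes straight (transversally) through
   each crossing, i.e. the incoming and outgoing darts of the same pass are
   opposite in the cyclic order (rot^2 swaps them). *)
definition admissible_rotation :: "'a list \<Rightarrow> (dart \<Rightarrow> dart) \<Rightarrow> bool" where
  "admissible_rotation w rot \<longleftrightarrow>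
     (\<forall>d \<in> darts w. rot d \<in> darts w \<and> vert w (rot d) = vert w d) \<and>
     (\<forall>p < length w. rot (rot (in_dart w p)) = out_dart p \<and>
                      rot (rot (out_dart p)) = in_dart w p)"

definition face_perm :: "(dart \<Rightarrow> dart) \<Rightarrow> dart \<Rightarrow> dart" where
  "face_perm rot = rot \<circ> alpha"

definition regions :: "'a list \<Rightarrow> (dart \<Rightarrow> dart) \<Rightarrow> dart set set" where
  "regions w rot = {{(face_perm rot ^^ k) d | k. True} | d. d \<in> darts w}"

(* the map is drawn on the sphere: Euler's formula V - E + F = 2
   with V = n, E = 2n, i.e. F = n + 2 *)
definition spherical_curve :: "'a list \<Rightarrow> (dart \<Rightarrow> dart) \<Rightarrow> bool" where
  "spherical_curve w rot \<longleftrightarrow>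
     gauss_word w \<and> admissible_rotation w rot \<and>
     card (regions w rot) = card (set w) + 2"

definition interlaced :: "'a list \<Rightarrow> 'a \<Rightarrow> 'a \<Rightarrow> bool" where
  "interlaced w a b \<longleftrightarrow> a \<noteq> b \<and>
     (\<exists>p1 p2 p3 p4. p1 < p2 \<and> p2 < p3 \<and> p3 < p4 \<and> p4 < length w \<and>
        ((w!p1 = a \<and> w!p2 = b \<and> w!p3 = a \<and> w!p4 = b) \<or>
         (w!p1 = b \<and> w!p2 = a \<and> w!p3 = b \<and> w!p4 = a)))"

definition trigon_at :: "'a list \<Rightarrow> (dart \<Rightarrow> dart) \<Rightarrow> dart \<Rightarrow> 'a \<Rightarrow> 'a \<Rightarrow> 'a \<Rightarrow> bool" where
  "trigon_at w rot d x y z \<longleftrightarrow> d \<in> darts w \<and>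
     (face_perm rot ^^ 3) d = d \<and>
     x = vert w (face_perm rot d) \<and> y = vert w ((face_perm rot ^^ 2) d) \<and> z = vert w d \<and>
     x \<noteq> y \<and> y \<noteq> z \<and> z \<noteq> x"

definition has_typeC_trigon :: "'a list \<Rightarrow> (dart \<Rightarrow> dart) \<Rightarrow> bool" where
  "has_typeC_trigon w rot \<longleftrightarrow>
     (\<exists>d x y z. trigon_at w rot d x y z \<and>
        interlaced w x y \<and> interlaced w y z \<and> interlaced w z x)"

definition reducible :: "'a list \<Rightarrow> bool" where
  "reducible w \<longleftrightarrow> (\<exists>c \<in> set w. \<forall>d \<in> set w. \<not> interlaced w c d)"

(* inverse-half-twisted splice: p A p B  \<mapsto>  rev A @ B *)
definition splice :: "'a list \<Rightarrow> 'a \<Rightarrow> 'a list" where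
  "splice w p = (let i = hd (filter (\<lambda>k. w!k = p) [0..<length w]);
                     j = last (filter (\<lambda>k. w!k = p) [0..<length w])
                 in rev (take (j - i - 1) (drop (Suc i) w)) @ drop (Suc j) w @ take i w)"

fun reducible_within :: "nat \<Rightarrow> 'a list \<Rightarrow> bool" where
  "reducible_within 0 w = reducible w"
| "reducible_within (Suc k) w = (reducible w \<or> (\<exists>p \<in> set w. reducible_within k (splice w p)))"

definition reductivity :: "'a list \<Rightarrow> nat" where
  "reductivity w = (LEAST k. reducible_within k w)"

end

theory Submission
  imports Defs
begin

(* The chords joining the two occurrences of each of the trigon's crossings x, y, z,
   together with the three edges of the trigon (each joining cyclically consecutive
   positions of the Gauss word), form a closed hexagon in the chord diagram.  Hence every
   other crossing is interlaced with an even number of x, y, z.  Splicing at p toggles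
   the interlacing of a and b exactly when both are interlaced with p.  So if some crossing
   v is interlaced with, say, y and z, then splicing at v, y and x in turn leaves z
   interlaced with nothing; otherwise splicing at x already leaves y isolated. *)

section \<open>Double occurrence words and interlacing\<close>

definition double_occurrence :: "'a list \<Rightarrow> bool" where
  "double_occurrence w \<longleftrightarrow> (\<forall>c \<in> set w. count_list w c = 2)"

lemma gauss_word_double_occurrence: "gauss_word w \<Longrightarrow> double_occurrence w"
  by (simp add: gauss_word_def double_occurrence_def)

lemma card_positions_eq_count_list: "card {q. q < length w \<and> w!q = c} = count_list w c"
  by (simp add: count_list_eq_length_filter length_filter_conv_card eq_commute)

lemma positions_eq_pair:
  assumes "count_list w c = 2" "i \<noteq> j" "i < length w" "j < length w" "w!i = c" "w!j = c"
  shows "{q. q < length w \<and> w!q = c} = {i, j}"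
proof (rule card_subset_eq[symmetric])
  show "card {i, j} = card {q. q < length w \<and> w!q = c}"
    using assms by (simp add: card_positions_eq_count_list)
qed (use assms in auto)

lemma obtain_positions:
  assumes "count_list w c = 2"
  obtains i j where "i < j" "j < length w" "w!i = c" "w!j = c"
    "{q. q < length w \<and> w!q = c} = {i, j}"
proof -
  have "card {q. q < length w \<and> w!q = c} = 2"
    using assms by (simp add: card_positions_eq_count_list)
  then obtain i j where ij: "{q. q < length w \<and> w!q = c} = {i, j}" "i \<noteq> j"
    by (auto simp: card_2_iff)
  then consider "i < j" | "j < i" by linarith
  then show thesis
    by cases (use ij that[of i j] that[of j i] in \<open>auto simp: insert_commute\<close>)
qed

definition between :: "nat \<Rightarrow> nat \<Rightarrow> nat \<Rightarrow> bool" where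
  "between i j k \<longleftrightarrow> (i < k) \<noteq> (j < k)"

definition chords_cross :: "nat \<Rightarrow> nat \<Rightarrow> nat \<Rightarrow> nat \<Rightarrow> bool" where
  "chords_cross i j k l \<longleftrightarrow> between i j k \<noteq> between i j l"

lemma chords_cross_order:
  assumes "chords_cross i j k l" "i \<noteq> k" "i \<noteq> l" "j \<noteq> k" "j \<noteq> l"
  shows "(min i j < min k l \<and> min k l < max i j \<and> max i j < max k l) \<or>
         (min k l < min i j \<and> min i j < max k l \<and> max k l < max i j)"
  using assms unfolding chords_cross_def between_def
  by (cases "i < k"; cases "j < k"; cases "i < l"; cases "j < l"; simp add: min_def max_def)

lemma interlaced_sym: "interlaced w a b = interlaced w b a"
  unfolding interlaced_def by blast

lemma interlaced_irrefl: "\<not> interlaced w a a"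
  by (simp add: interlaced_def)

lemma interlaced_iff_chords_cross:
  assumes "count_list w c = 2" "count_list w d = 2"
    and "i \<noteq> j" "i < length w" "j < length w" "w!i = c" "w!j = c"
    and "k \<noteq> l" "k < length w" "l < length w" "w!k = d" "w!l = d"
  shows "interlaced w c d \<longleftrightarrow> c \<noteq> d \<and> chords_cross i j k l"
proof
  assume I: "interlaced w c d"
  have pos_c: "\<And>q. q < length w \<Longrightarrow> w!q = c \<Longrightarrow> q = i \<or> q = j"
    using positions_eq_pair[OF assms(1,3-7)] by blast
  have pos_d: "\<And>q. q < length w \<Longrightarrow> w!q = d \<Longrightarrow> q = k \<or> q = l"
    using positions_eq_pair[OF assms(2,8-12)] by blast
  from I obtain p1 p2 p3 p4 where p: "p1 < p2" "p2 < p3" "p3 < p4" "p4 < length w"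
    "(w!p1 = c \<and> w!p2 = d \<and> w!p3 = c \<and> w!p4 = d) \<or>
     (w!p1 = d \<and> w!p2 = c \<and> w!p3 = d \<and> w!p4 = c)" and "c \<noteq> d"
    unfolding interlaced_def by blast
  from p(5) have "chords_cross i j k l"
  proof
    assume "w!p1 = c \<and> w!p2 = d \<and> w!p3 = c \<and> w!p4 = d"
    then have "p1 = i \<or> p1 = j" "p3 = i \<or> p3 = j" "p2 = k \<or> p2 = l" "p4 = k \<or> p4 = l"
      using pos_c pos_d p(1-4) by auto
    then show ?thesis using p(1-3) unfolding chords_cross_def between_def by auto
  next
    assume "w!p1 = d \<and> w!p2 = c \<and> w!p3 = d \<and> w!p4 = c"
    then have "p2 = i \<or> p2 = j" "p4 = i \<or> p4 = j" "p1 = k \<or> p1 = l" "p3 = k \<or> p3 = l"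
      using pos_c pos_d p(1-4) by auto
    then show ?thesis using p(1-3) unfolding chords_cross_def between_def by auto
  qed
  with \<open>c \<noteq> d\<close> show "c \<noteq> d \<and> chords_cross i j k l" ..
next
  assume H: "c \<noteq> d \<and> chords_cross i j k l"
  then have "i \<noteq> k" "i \<noteq> l" "j \<noteq> k" "j \<noteq> l" using assms by auto
  then have "(min i j < min k l \<and> min k l < max i j \<and> max i j < max k l) \<or>
             (min k l < min i j \<and> min i j < max k l \<and> max k l < max i j)"
    using H chords_cross_order by blast
  moreover have "w!min i j = c" "w!max i j = c" "w!min k l = d" "w!max k l = d"
    "max i j < length w" "max k l < length w"
    using assms by (simp_all add: min_def max_def)
  ultimately show "interlaced w c d"
    unfolding interlaced_def using H by blast
qed

section \<open>The inverse-half-twisted splice\<close>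

lemma splice_eq_positions:
  assumes "i < j" "j < length w" "w!i = p" "w!j = p" "{q. q < length w \<and> w!q = p} = {i, j}"
  shows "splice w p = rev (take (j - i - 1) (drop (Suc i) w)) @ drop (Suc j) w @ take i w"
proof -
  have "filter (\<lambda>k. w!k = p) [0..<length w] = [i, j]"
  proof (rule sorted_distinct_set_unique)
    show "set (filter (\<lambda>k. w!k = p) [0..<length w]) = set [i, j]"
      using assms(5) by auto
  qed (use assms(1) in \<open>simp_all add: sorted_filter[where f = id, simplified]\<close>)
  then show ?thesis
    unfolding splice_def by (simp add: Let_def)
qed

lemma split_at_two_positions:
  assumes "i < j" "j < length w"
  shows "w = take i w @ w!i # take (j - i - 1) (drop (Suc i) w) @ w!j # drop (Suc j) w"
proof -
  have "w = take i w @ drop i w" by simp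
  also have "drop i w = w!i # drop (Suc i) w" using assms by (simp add: Cons_nth_drop_Suc)
  also have "drop (Suc i) w = take (j - i - 1) (drop (Suc i) w) @ drop j w"
    using assms by (metis Suc_diff_Suc append_take_drop_id diff_Suc_1 drop_drop le_add_diff_inverse2
        less_or_eq_imp_le Suc_leI)
  also have "drop j w = w!j # drop (Suc j) w" using assms by (simp add: Cons_nth_drop_Suc)
  finally show ?thesis by simp
qed

(* Position in splice w p of the letter at position u of w, when p occupies positions i < j
   of w and m = length w: the segment strictly between i and j is reversed and moved to
   the front, followed by the segment after j and then the one before i. *)
definition splice_index :: "nat \<Rightarrow> nat \<Rightarrow> nat \<Rightarrow> nat \<Rightarrow> nat" where
  "splice_index i j m u =
     (if u < i then (j - i - 1) + (m - j - 1) + u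
      else if u < j then j - 1 - u
      else u - j - 1 + (j - i - 1))"

lemma splice_index_less_iff:
  assumes "i < j" "u < m" "u \<noteq> i" "u \<noteq> j" "v < m" "v \<noteq> i" "v \<noteq> j" "u \<noteq> v"
  shows "splice_index i j m u < splice_index i j m v \<longleftrightarrow>
    (u < v) \<noteq> ((between i j u \<and> between i j v) \<noteq> ((u < i) \<noteq> (v < i)))"
  using assms unfolding splice_index_def between_def by auto

lemma splice_index_inj:
  assumes "i < j" "j < m" "u < m" "u \<noteq> i" "u \<noteq> j" "v < m" "v \<noteq> i" "v \<noteq> j" "u \<noteq> v"
  shows "splice_index i j m u \<noteq> splice_index i j m v"
  using assms unfolding splice_index_def by auto

lemma nth_splice_index:
  assumes "i < j" "j < length w" "u < length w" "u \<noteq> i" "u \<noteq> j"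
  shows "splice_index i j (length w) u < length w - 2"
    and "(rev (take (j - i - 1) (drop (Suc i) w)) @ drop (Suc j) w @ take i w)
           ! splice_index i j (length w) u = w ! u"
proof -
  define A where "A = take (j - i - 1) (drop (Suc i) w)"
  have len_A: "length A = j - i - 1" using assms unfolding A_def by simp
  consider "u < i" | "i < u" "u < j" | "j < u" using assms by linarith
  then have "splice_index i j (length w) u < length w - 2 \<and>
    (rev A @ drop (Suc j) w @ take i w) ! splice_index i j (length w) u = w ! u"
  proof cases
    case 1
    then show ?thesis
      using assms len_A by (simp add: A_def splice_index_def nth_append) arith
  next
    case 2
    then have "rev A ! (j - 1 - u) = A ! (u - i - 1)"
      using len_A by (simp add: rev_nth Suc_diff_Suc)
    also have "\<dots> = w ! u"
      using 2 assms unfolding A_def by (simp add: Suc_diff_Suc)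
    finally show ?thesis
      using 2 assms len_A by (simp add: splice_index_def nth_append) arith
  next
    case 3
    then show ?thesis
      using assms len_A by (simp add: A_def splice_index_def nth_append) arith
  qed
  then show "splice_index i j (length w) u < length w - 2"
    and "(rev (take (j - i - 1) (drop (Suc i) w)) @ drop (Suc j) w @ take i w)
           ! splice_index i j (length w) u = w ! u"
    unfolding A_def by auto
qed

lemma obtain_splice_positions:
  assumes "double_occurrence w" "p \<in> set w"
  obtains i j where "i < j" "j < length w" "w!i = p" "w!j = p"
    "splice w p = rev (take (j - i - 1) (drop (Suc i) w)) @ drop (Suc j) w @ take i w"
proof -
  have "count_list w p = 2"
    using assms unfolding double_occurrence_def by blast
  then obtain i j where ij: "i < j" "j < length w" "w!i = p" "w!j = p"
    "{q. q < length w \<and> w!q = p} = {i, j}"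
    by (rule obtain_positions)
  show thesis
    using that[OF ij(1-4) splice_eq_positions[OF ij]] .
qed

lemma splice_decomposition:
  assumes "double_occurrence w" "p \<in> set w"
  obtains F A B where "w = F @ p # A @ p # B" "splice w p = rev A @ B @ F"
    "p \<notin> set F" "p \<notin> set A" "p \<notin> set B"
proof -
  obtain i j where ij: "i < j" "j < length w" "w!i = p" "w!j = p"
    and s: "splice w p = rev (take (j - i - 1) (drop (Suc i) w)) @ drop (Suc j) w @ take i w"
    using obtain_splice_positions[OF assms] .
  define F where "F = take i w"
  define A where "A = take (j - i - 1) (drop (Suc i) w)"
  define B where "B = drop (Suc j) w"
  have w: "w = F @ p # A @ p # B"
    using split_at_two_positions[OF ij(1,2)] unfolding F_def A_def B_def ij(3,4) .
  have "count_list w p = 2"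
    using assms unfolding double_occurrence_def by blast
  then have "count_list F p = 0" "count_list A p = 0" "count_list B p = 0"
    by (simp_all add: w)
  then show thesis
    using that[OF w] s count_list_0_iff unfolding F_def A_def B_def by metis
qed

lemma count_list_splice:
  assumes "double_occurrence w" "p \<in> set w"
  shows "count_list (splice w p) c = (if c = p then 0 else count_list w c)"
proof -
  obtain F A B where "w = F @ p # A @ p # B" "splice w p = rev A @ B @ F"
    "p \<notin> set F" "p \<notin> set A" "p \<notin> set B"
    using splice_decomposition[OF assms] .
  then show ?thesis by simp
qed

lemma length_splice:
  assumes "double_occurrence w" "p \<in> set w"
  shows "length (splice w p) = length w - 2"
proof -
  obtain F A B where "w = F @ p # A @ p # B" "splice w p = rev A @ B @ F"
    using splice_decomposition[OF assms] .
  then show ?thesis by simp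
qed

lemma set_splice:
  assumes "double_occurrence w" "p \<in> set w"
  shows "set (splice w p) = set w - {p}"
proof -
  obtain F A B where "w = F @ p # A @ p # B" "splice w p = rev A @ B @ F"
    "p \<notin> set F" "p \<notin> set A" "p \<notin> set B"
    using splice_decomposition[OF assms] .
  then show ?thesis by auto
qed

lemma double_occurrence_splice:
  assumes "double_occurrence w" "p \<in> set w"
  shows "double_occurrence (splice w p)"
  using assms(1) unfolding double_occurrence_def
  by (simp add: set_splice[OF assms] count_list_splice[OF assms])

lemma interlaced_splice:
  assumes "double_occurrence w" "p \<in> set w" "a \<in> set w" "b \<in> set w"
    and "a \<noteq> p" "b \<noteq> p" "a \<noteq> b"
  shows "interlaced (splice w p) a b \<longleftrightarrow>
    interlaced w a b \<noteq> (interlaced w p a \<and> interlaced w p b)"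
proof -
  obtain i j where ij: "i < j" "j < length w" "w!i = p" "w!j = p"
    and s: "splice w p = rev (take (j - i - 1) (drop (Suc i) w)) @ drop (Suc j) w @ take i w"
    using obtain_splice_positions[OF assms(1,2)] .
  have count: "count_list w p = 2" "count_list w a = 2" "count_list w b = 2"
    "count_list (splice w p) a = 2" "count_list (splice w p) b = 2"
    using assms count_list_splice[OF assms(1,2)] unfolding double_occurrence_def by auto
  obtain u1 u2 where u: "u1 < u2" "u2 < length w" "w!u1 = a" "w!u2 = a"
    using obtain_positions[OF count(2)] by blast
  obtain v1 v2 where v: "v1 < v2" "v2 < length w" "w!v1 = b" "w!v2 = b"
    using obtain_positions[OF count(3)] by blast
  have ne: "u1 \<noteq> i" "u1 \<noteq> j" "u2 \<noteq> i" "u2 \<noteq> j" "v1 \<noteq> i" "v1 \<noteq> j" "v2 \<noteq> i" "v2 \<noteq> j"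
    "u1 \<noteq> v1" "u1 \<noteq> v2" "u2 \<noteq> v1" "u2 \<noteq> v2"
    using u v ij assms(5-7) by auto
  have lt: "u1 < length w" "v1 < length w" using u v by simp_all
  let ?s = "splice_index i j (length w)"
  have moved: "?s u < length (splice w p)" "splice w p ! ?s u = w ! u"
    if "u < length w" "u \<noteq> i" "u \<noteq> j" for u
    using nth_splice_index[OF ij(1,2) that] length_splice[OF assms(1,2)] s by simp_all
  have "interlaced (splice w p) a b \<longleftrightarrow> chords_cross (?s u1) (?s u2) (?s v1) (?s v2)"
  proof (rule interlaced_iff_chords_cross[OF count(4,5), THEN trans])
    show "?s u1 \<noteq> ?s u2" "?s v1 \<noteq> ?s v2"
      using splice_index_inj[OF ij(1,2)] u v lt ne by simp_all
  qed (use moved u v lt ne assms(7) in simp_all)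
  moreover have "interlaced w a b \<longleftrightarrow> chords_cross u1 u2 v1 v2"
    using interlaced_iff_chords_cross[OF count(2,3)] u v lt assms(7) by simp
  moreover have "interlaced w p a \<longleftrightarrow> chords_cross i j u1 u2"
    using interlaced_iff_chords_cross[OF count(1,2)] ij u lt assms(5) by simp
  moreover have "interlaced w p b \<longleftrightarrow> chords_cross i j v1 v2"
    using interlaced_iff_chords_cross[OF count(1,3)] ij v lt assms(6) by simp
  moreover have
    "?s u1 < ?s v1 \<longleftrightarrow> (u1 < v1) \<noteq> ((between i j u1 \<and> between i j v1) \<noteq> ((u1 < i) \<noteq> (v1 < i)))"
    "?s u1 < ?s v2 \<longleftrightarrow> (u1 < v2) \<noteq> ((between i j u1 \<and> between i j v2) \<noteq> ((u1 < i) \<noteq> (v2 < i)))"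
    "?s u2 < ?s v1 \<longleftrightarrow> (u2 < v1) \<noteq> ((between i j u2 \<and> between i j v1) \<noteq> ((u2 < i) \<noteq> (v1 < i)))"
    "?s u2 < ?s v2 \<longleftrightarrow> (u2 < v2) \<noteq> ((between i j u2 \<and> between i j v2) \<noteq> ((u2 < i) \<noteq> (v2 < i)))"
    using splice_index_less_iff[OF ij(1)] u v lt ne by simp_all
  ultimately show ?thesis
    unfolding chords_cross_def between_def[of "?s u1"] between_def[of "?s u2"]
      between_def[of u1 u2] by argo
qed

section \<open>Trigons\<close>

lemma dpos_less:
  assumes "d \<in> darts w"
  shows "dpos w d < length w"
proof (cases d)
  case (Pair e b)
  then have "e < length w" "w \<noteq> []" using assms by (auto simp: darts_def)
  then show ?thesis using Pair by (cases b) simp_all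
qed

lemma dart_at_dpos:
  assumes "d \<in> darts w"
  shows "d = in_dart w (dpos w d) \<or> d = out_dart (dpos w d)"
proof (cases d)
  case (Pair e b)
  then have e: "e < length w" using assms by (simp add: darts_def)
  have "(Suc e mod length w + length w - 1) mod length w = e"
  proof (cases "Suc e < length w")
    case False
    then have "Suc e = length w" using e by simp
    then show ?thesis by simp
  qed (simp add: e)
  then show ?thesis
    using Pair by (cases b) (simp_all add: in_dart_def out_dart_def)
qed

lemma dpos_rot_neq:
  assumes "admissible_rotation w rot" "d \<in> darts w"
  shows "dpos w (rot d) \<noteq> dpos w d"
proof
  assume same: "dpos w (rot d) = dpos w d"
  define p where "p = dpos w d"
  have "p < length w" using dpos_less assms(2) p_def by blast
  then have "rot (rot (in_dart w p)) = out_dart p" "rot (rot (out_dart p)) = in_dart w p"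
    using assms(1) unfolding admissible_rotation_def by auto
  moreover have "rot d \<in> darts w" using assms unfolding admissible_rotation_def by blast
  then have "rot d = in_dart w p \<or> rot d = out_dart p"
    using dart_at_dpos same p_def by metis
  moreover have "d = in_dart w p \<or> d = out_dart p"
    using dart_at_dpos assms(2) p_def by blast
  moreover have "in_dart w p \<noteq> out_dart p" by (simp add: in_dart_def out_dart_def)
  ultimately show False by auto
qed

lemma between_dart_ends:
  assumes "d \<in> darts w" "k < length w" "k \<noteq> dpos w d" "k \<noteq> dpos w (alpha d)"
  shows "between (dpos w d) (dpos w (alpha d)) k \<longleftrightarrow> Suc (fst d) = length w"
proof (cases d)
  case (Pair e b)
  then have "e < length w" using assms by (simp add: darts_def)
  then consider "Suc e < length w" | "Suc e = length w" by linarith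
  then show ?thesis
    using assms Pair unfolding between_def by cases (cases b; auto)+
qed

lemma alpha_in_darts: "d \<in> darts w \<Longrightarrow> alpha d \<in> darts w"
  by (cases d) (simp add: darts_def)

lemma face_perm_in_darts:
  assumes "admissible_rotation w rot" "d \<in> darts w"
  shows "face_perm rot d \<in> darts w"
  using assms(1) alpha_in_darts[OF assms(2)]
  unfolding admissible_rotation_def face_perm_def comp_def by blast

lemma occurrences_at_face_perm:
  assumes "admissible_rotation w rot" "d \<in> darts w"
  shows "w ! dpos w (alpha d) = vert w (face_perm rot d)"
    and "w ! dpos w (face_perm rot d) = vert w (face_perm rot d)"
    and "dpos w (alpha d) \<noteq> dpos w (face_perm rot d)"
    and "dpos w (alpha d) < length w" "dpos w (face_perm rot d) < length w"
proof -
  have a: "alpha d \<in> darts w" using assms(2) by (rule alpha_in_darts)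
  then have "vert w (rot (alpha d)) = vert w (alpha d)"
    using assms(1) unfolding admissible_rotation_def by blast
  then show "w ! dpos w (alpha d) = vert w (face_perm rot d)"
    "w ! dpos w (face_perm rot d) = vert w (face_perm rot d)"
    unfolding face_perm_def comp_def vert_def by simp_all
  show "dpos w (alpha d) \<noteq> dpos w (face_perm rot d)"
    using dpos_rot_neq[OF assms(1) a] unfolding face_perm_def comp_def by simp
  show "dpos w (alpha d) < length w" "dpos w (face_perm rot d) < length w"
    using dpos_less a face_perm_in_darts[OF assms] by blast+
qed

(* between is additive along the closed walk xa, xb, ya, yb, za, zb, xa formed by
   the three chords and the three edges. *)
lemma chords_cross_around_triangle:
  assumes "between zb xa k = between zb xa l" "between xb ya k = between xb ya l"
    and "between yb za k = between yb za l"
  shows "chords_cross za zb k l \<longleftrightarrow> chords_cross xa xb k l \<noteq> chords_cross ya yb k l"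
  using assms unfolding chords_cross_def between_def by argo

lemma trigon_interlaced_parity:
  assumes "double_occurrence w" "admissible_rotation w rot" "trigon_at w rot d x y z"
    and "c \<in> set w" "c \<notin> {x, y, z}"
  shows "interlaced w z c \<longleftrightarrow> interlaced w x c \<noteq> interlaced w y c"
proof -
  define d1 where "d1 = face_perm rot d"
  define d2 where "d2 = face_perm rot d1"
  have d: "d \<in> darts w" "d1 \<in> darts w" "d2 \<in> darts w" and cyc: "face_perm rot d2 = d"
    and xyz: "x = vert w d1" "y = vert w d2" "z = vert w d"
    using assms(3) face_perm_in_darts[OF assms(2)]
    unfolding trigon_at_def d1_def d2_def by (auto simp: numeral_eq_Suc)
  obtain k l where kl: "k < l" "l < length w" "w!k = c" "w!l = c"
    using assms(1,4) obtain_positions unfolding double_occurrence_def by metis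
  have chords: "interlaced w (vert w (face_perm rot e)) c \<longleftrightarrow>
      chords_cross (dpos w (alpha e)) (dpos w (face_perm rot e)) k l"
    if "e \<in> darts w" "vert w (face_perm rot e) \<noteq> c" for e
  proof (rule interlaced_iff_chords_cross[THEN trans])
    show "count_list w (vert w (face_perm rot e)) = 2" "count_list w c = 2"
      using assms(1,4) occurrences_at_face_perm[OF assms(2) that(1)] nth_mem
      unfolding double_occurrence_def by metis+
  qed (use that kl occurrences_at_face_perm[OF assms(2) that(1)] in auto)
  have edge: "between (dpos w e) (dpos w (alpha e)) k = between (dpos w e) (dpos w (alpha e)) l"
    if "e \<in> darts w" "vert w e \<noteq> c" "vert w (face_perm rot e) \<noteq> c" for e
    using that kl between_dart_ends[OF that(1)] occurrences_at_face_perm(1)[OF assms(2) that(1)]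
    unfolding vert_def by (metis less_trans)
  show ?thesis
    using chords_cross_around_triangle[OF edge[of d] edge[of d1] edge[of d2]]
      chords[of d] chords[of d1] chords[of d2] d cyc xyz assms(5)
    unfolding d1_def[symmetric] d2_def[symmetric] by auto
qed

lemma vert_in_set: "d \<in> darts w \<Longrightarrow> vert w d \<in> set w"
  unfolding vert_def using dpos_less nth_mem by blast

lemma trigon_vertices_in_set:
  assumes "admissible_rotation w rot" "trigon_at w rot d x y z"
  shows "x \<in> set w" "y \<in> set w" "z \<in> set w"
proof -
  have "d \<in> darts w" and xyz: "x = vert w (face_perm rot d)"
    "y = vert w (face_perm rot (face_perm rot d))" "z = vert w d"
    using assms(2) unfolding trigon_at_def by (simp_all add: numeral_eq_Suc)
  then show "x \<in> set w" "y \<in> set w" "z \<in> set w"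
    using vert_in_set face_perm_in_darts[OF assms(1)] by metis+
qed

section \<open>Reducibility\<close>

lemma reducible_within_mono:
  "reducible_within k w \<Longrightarrow> k \<le> n \<Longrightarrow> reducible_within n w"
proof (induction k arbitrary: n w)
  case 0
  then show ?case by (cases n) auto
next
  case (Suc k)
  then obtain n' where "n = Suc n'" "k \<le> n'" by (cases n) auto
  with Suc show ?case by auto
qed

lemma reducible_after_splice:
  assumes "double_occurrence w" "x \<in> set w" "y \<in> set w" "x \<noteq> y" "interlaced w x y"
    and "\<forall>c \<in> set w - {x, y}. interlaced w y c \<longleftrightarrow> interlaced w x c"
  shows "reducible (splice w x)"
  unfolding reducible_def
proof (intro bexI ballI)
  show "y \<in> set (splice w x)" using assms by (simp add: set_splice)
  fix c assume "c \<in> set (splice w x)"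
  then have c: "c \<in> set w" "c \<noteq> x" using assms(1,2) by (auto simp: set_splice)
  show "\<not> interlaced (splice w x) y c"
  proof (cases "c = y")
    case False
    then show ?thesis
      using assms c interlaced_splice[OF assms(1,2)] by auto
  qed (simp add: interlaced_irrefl)
qed

lemma not_interlaced_after_three_splices:
  assumes double: "double_occurrence w"
    and set: "a \<in> set w" "b \<in> set w" "c \<in> set w" "v \<in> set w" "d \<in> set w"
    and distinct: "distinct [a, b, c, v, d]"
    and triangle: "interlaced w a b" "interlaced w b c" "interlaced w a c"
    and v: "\<not> interlaced w v a" "interlaced w v b" "interlaced w v c"
    and parity: "interlaced w c d \<longleftrightarrow> interlaced w a d \<noteq> interlaced w b d"
  shows "\<not> interlaced (splice (splice (splice w v) b) a) c d"
proof -
  define w1 where "w1 = splice w v"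
  define w2 where "w2 = splice w1 b"
  have w1: "double_occurrence w1" "set w1 = set w - {v}"
    unfolding w1_def using double set(4) by (simp_all add: double_occurrence_splice set_splice)
  have in1: "a \<in> set w1" "b \<in> set w1" "c \<in> set w1" "d \<in> set w1"
    using w1(2) set distinct by auto
  have w2: "double_occurrence w2" "set w2 = set w1 - {b}"
    unfolding w2_def using w1(1) in1(2) by (simp_all add: double_occurrence_splice set_splice)
  have in2: "a \<in> set w2" "c \<in> set w2" "d \<in> set w2"
    using w2(2) in1 distinct by auto
  have I1: "interlaced w1 p q \<longleftrightarrow> interlaced w p q \<noteq> (interlaced w v p \<and> interlaced w v q)"
    if "p \<in> set w1" "q \<in> set w1" "p \<noteq> q" for p q
    using that w1(2) interlaced_splice[OF double set(4)] unfolding w1_def by auto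
  have I2: "interlaced w2 p q \<longleftrightarrow> interlaced w1 p q \<noteq> (interlaced w1 b p \<and> interlaced w1 b q)"
    if "p \<in> set w2" "q \<in> set w2" "p \<noteq> q" for p q
    using that w2(2) interlaced_splice[OF w1(1) in1(2)] unfolding w2_def by auto
  have ne: "a \<noteq> b" "a \<noteq> c" "b \<noteq> c" "a \<noteq> d" "b \<noteq> d" "c \<noteq> d"
    using distinct by auto
  have "interlaced w1 a b" "interlaced w1 a c" "\<not> interlaced w1 b c"
    using I1[OF in1(1,2) ne(1)] I1[OF in1(1,3) ne(2)] I1[OF in1(2,3) ne(3)] triangle v
    by simp_all
  then have "interlaced w2 a c"
    using I2[OF in2(1,2) ne(2)] interlaced_sym by metis
  moreover have "interlaced w2 c d \<longleftrightarrow> interlaced w c d \<noteq> interlaced w v d"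
    using I2[OF in2(2,3) ne(6)] I1[OF in1(3,4) ne(6)] \<open>\<not> interlaced w1 b c\<close> interlaced_sym v
    by metis
  moreover have "interlaced w2 a d \<longleftrightarrow> interlaced w a d \<noteq> (interlaced w b d \<noteq> interlaced w v d)"
    using I2[OF in2(1,3) ne(4)] I1[OF in1(1,4) ne(4)] I1[OF in1(2,4) ne(5)]
      \<open>interlaced w1 a b\<close> interlaced_sym v by metis
  moreover have "interlaced (splice w2 a) c d \<longleftrightarrow>
      interlaced w2 c d \<noteq> (interlaced w2 a c \<and> interlaced w2 a d)"
    using interlaced_splice[OF w2(1) in2(1,2,3)] ne by simp
  ultimately show ?thesis
    using parity unfolding w1_def w2_def by argo
qed

lemma reducible_after_three_splices:
  assumes double: "double_occurrence w"
    and set: "a \<in> set w" "b \<in> set w" "c \<in> set w" "v \<in> set w"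
    and distinct: "distinct [a, b, c, v]"
    and triangle: "interlaced w a b" "interlaced w b c" "interlaced w a c"
    and v: "\<not> interlaced w v a" "interlaced w v b" "interlaced w v c"
    and parity: "\<forall>d \<in> set w - {a, b, c}. interlaced w c d \<longleftrightarrow> interlaced w a d \<noteq> interlaced w b d"
  shows "reducible (splice (splice (splice w v) b) a)"
proof -
  have sets: "set (splice (splice (splice w v) b) a) = set w - {v, b, a}"
    using double set distinct
    by (auto simp: set_splice double_occurrence_splice)
  show ?thesis
    unfolding reducible_def
  proof (intro bexI ballI)
    show "c \<in> set (splice (splice (splice w v) b) a)"
      using sets set distinct by auto
    fix d assume "d \<in> set (splice (splice (splice w v) b) a)"
    then have d: "d \<in> set w" "d \<notin> {v, b, a}" using sets by auto
    show "\<not> interlaced (splice (splice (splice w v) b) a) c d"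
    proof (cases "d = c")
      case False
      then show ?thesis
        using not_interlaced_after_three_splices[OF double set d(1) _ triangle v] parity
          d distinct by auto
    qed (simp add: interlaced_irrefl)
  qed
qed

lemma reducible_within_3_of_interlaced_triangle:
  assumes double: "double_occurrence w"
    and set: "x \<in> set w" "y \<in> set w" "z \<in> set w" and distinct: "distinct [x, y, z]"
    and triangle: "interlaced w x y" "interlaced w y z" "interlaced w x z"
    and parity: "\<forall>c \<in> set w - {x, y, z}. interlaced w z c \<longleftrightarrow> interlaced w x c \<noteq> interlaced w y c"
  shows "reducible_within 3 w"
proof (cases "\<exists>v \<in> set w - {x, y, z}. interlaced w x v \<or> interlaced w y v")
  case True
  have by_three_splices: "reducible_within 3 w"
    if "a \<in> set w" "b \<in> set w" "v \<in> set w" "distinct [a, b, v]"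
      "reducible (splice (splice (splice w v) b) a)" for a b v
    using that double by (simp add: numeral_3_eq_3 set_splice double_occurrence_splice) blast
  from True obtain v where v: "v \<in> set w" "v \<notin> {x, y, z}"
    and "interlaced w v x \<or> interlaced w v y" by (auto simp: interlaced_sym)
  moreover have "interlaced w v z \<longleftrightarrow> interlaced w v x \<noteq> interlaced w v y"
    using parity v by (simp add: interlaced_sym)
  ultimately consider
      "\<not> interlaced w v x" "interlaced w v y" "interlaced w v z"
    | "\<not> interlaced w v y" "interlaced w v x" "interlaced w v z"
    | "\<not> interlaced w v z" "interlaced w v x" "interlaced w v y"
    by auto
  then show ?thesis
  proof cases
    case 1
    have "reducible (splice (splice (splice w v) y) x)"
      by (rule reducible_after_three_splices[OF double set v(1) _ triangle 1 parity])
        (use v distinct in auto)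
    then show ?thesis using by_three_splices[of x y v] set v distinct by auto
  next
    case 2
    have "reducible (splice (splice (splice w v) x) y)"
    proof (rule reducible_after_three_splices[OF double set(2,1,3) v(1)])
      show "interlaced w y x" using triangle(1) by (simp add: interlaced_sym)
      show "\<forall>d \<in> set w - {y, x, z}. interlaced w z d \<longleftrightarrow> interlaced w y d \<noteq> interlaced w x d"
        using parity by auto
    qed (use 2 triangle v distinct in auto)
    then show ?thesis using by_three_splices[of y x v] set v distinct by auto
  next
    case 3
    have "reducible (splice (splice (splice w v) x) z)"
    proof (rule reducible_after_three_splices[OF double set(3,1,2) v(1)])
      show "interlaced w z x" "interlaced w z y"
        using triangle(2,3) by (simp_all add: interlaced_sym)
      show "\<forall>d \<in> set w - {z, x, y}. interlaced w y d \<longleftrightarrow> interlaced w z d \<noteq> interlaced w x d"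
        using parity by auto
    qed (use 3 triangle v distinct in auto)
    then show ?thesis using by_three_splices[of z x v] set v distinct by auto
  qed
next
  case False
  then have "reducible (splice w x)"
    using reducible_after_splice[OF double set(1,2) _ triangle(1)] triangle(2,3) distinct
      interlaced_sym by auto
  then have "reducible_within 1 w"
    using set(1) by auto
  then show ?thesis
    by (rule reducible_within_mono) simp
qed

theorem mainTheorem6:
  fixes w :: "'a list" and rot :: "dart \<Rightarrow> dart"
  assumes "spherical_curve w rot"
    and "has_typeC_trigon w rot"
  shows "reductivity w \<le> 3"
proof -
  have double: "double_occurrence w" and rot: "admissible_rotation w rot"
    using assms(1) gauss_word_double_occurrence unfolding spherical_curve_def by auto
  obtain d x y z where trigon: "trigon_at w rot d x y z"
    and triangle: "interlaced w x y" "interlaced w y z" "interlaced w z x"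
    using assms(2) unfolding has_typeC_trigon_def by blast
  have "reducible_within 3 w"
  proof (rule reducible_within_3_of_interlaced_triangle[OF double])
    show "x \<in> set w" "y \<in> set w" "z \<in> set w"
      using trigon_vertices_in_set[OF rot trigon] .
    show "distinct [x, y, z]"
      using trigon unfolding trigon_at_def by auto
    show "interlaced w x z"
      using triangle(3) by (simp add: interlaced_sym)
    show "\<forall>c \<in> set w - {x, y, z}. interlaced w z c \<longleftrightarrow> interlaced w x c \<noteq> interlaced w y c"
      using trigon_interlaced_parity[OF double rot trigon] by blast
  qed (use triangle in blast)+
  then show ?thesis
    unfolding reductivity_def by (rule Least_le)
qed

end
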